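(* If $\mathbb{C}$ is an isostable squares category, then $S^{\square}_\bullet\mathbb{C}$ is a simplicial groupoid, i.e. every category $S^{\square}_n\mathbb{C}$ is a groupoid.
   Context: A squares category is a flat double category (squares uniquely determined by their boundary; we say a boundary "is a square") with a distinguished object $O$ initial in the horizontal category $\mathcal{H}_{\mathbb{C}}$ (morphisms $\rightarrowtail$) and terminal in the vertical category $\mathcal{V}_{\mathbb{C}}$ (morphisms $\twoheadrightarrow$). A vertical $f:A\twoheadrightarrow B$ is a vertical weak equivalence if the boundary (top $O\rightarrowtail A$, left $\mathrm{id}_O$, right $f$, bottom $O\rightarrowtail B$) is a square; a horizontal $g:A\rightarrowtail B$ is a horizontal weak equivalence if the boundary (top $g$, left $A\twoheadrightarrow O$, right $B\twoheadrightarrow O$, bottom $\mathrm{id}_O$) is a square. Vertical natural transformations between double functors of flat double categories: vertical components $\tau_A$ with $(Ff,\tau_A,\tau_{A'},Gf)$ a square for each horizontal $f$ and commuting naturality squares in the vertical category; $\mathrm{Fun}^v$ is the functor category. With $\boxdot$ the flat double category generated by one square (corners $a,b,c,d$, horizontal $a\rightarrowtail b,c\rightarrowtail d$, vertical $a\twoheadrightarrow c,b\twoheadrightarrow d$), $i:\mathrm{span}\hookrightarrow\boxdot$ on $a\rightarrowtail b,a\twoheadrightarrow c$ and $j:\mathrm{cospan}\hookrightarrow\boxdot$ on $b\twoheadrightarrow d,c\rightarrowtail d$: a squares category is stable if (i) $i^*$ on $\mathrm{Fun}^v(-,\mathbb{C})$ has a section functor $s$, (ii) there is a natural transformation $w:si^*\Rightarrow\mathrm{id}$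 with components the identity at $a,b,c$, (iii) $j^*$ has a section functor $t$, (iv) there is a natural transformation $u:tj^*\Rightarrow\mathrm{id}$ with components the identity at $b,c,d$ and a vertical weak equivalence at $a$. It is isostable if it is stable, its weak equivalences are invertible, and for every boundary with top $f:A\rightarrowtail B$, bottom $k:C\rightarrowtail D$ and vertical isomorphisms $g:A\twoheadrightarrow C$, $h:B\twoheadrightarrow D$, this boundary is a square iff the boundary with top $k$, left $g^{-1}$, right $h^{-1}$, bottom $f$ is a square. $S^{\square}_n\mathbb{C}$: objects are families $(A_{jk})_{0\le j\le k\le n}$ with $A_{jj}=O$, horizontal $A_{jk}\rightarrowtail A_{j,k+1}$, vertical $A_{jk}\twoheadrightarrow A_{j+1,k}$, each unit cell ($j<k<n$) a square; morphisms are families of vertical morphisms $A_{jk}\twoheadrightarrow A'_{jk}$ such that every cell formed with a horizontal generator is a square and every cell formed with a vertical generator commutes in $\mathcal{V}_{\mathbb{C}}$. Simplicial structure by reindexing $(A_{jk})\mapsto(A_{\theta(j)\theta(k)})$. *)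

theory Defs
  imports Main
begin

text \<open>A flat double category: objects, a horizontal category (morphisms 'h),
a vertical category (morphisms 'v), and a predicate Sq t l r b saying that the
boundary with top t, left l, right r, bottom b is a square.  Composition is
written in diagrammatic-reverse order: hcomp g f = g o f.\<close>

record ('o, 'h, 'v) dcat =
  Ob :: "'o set"
  Hor :: "'h set"
  hdom :: "'h \<Rightarrow> 'o"
  hcod :: "'h \<Rightarrow> 'o"
  hcomp :: "'h \<Rightarrow> 'h \<Rightarrow> 'h"
  hid :: "'o \<Rightarrow> 'h"
  Ver :: "'v set"
  vdom :: "'v \<Rightarrow> 'o"
  vcod :: "'v \<Rightarrow> 'o"
  vcomp :: "'v \<Rightarrow> 'v \<Rightarrow> 'v"
  vid :: "'o \<Rightarrow> 'v"
  Sq :: "'h \<Rightarrow> 'v \<Rightarrow> 'v \<Rightarrow> 'h \<Rightarrow> bool"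

definition hcat :: "('o, 'h, 'v, 'z) dcat_scheme \<Rightarrow> bool" where
  "hcat C \<longleftrightarrow>
     (\<forall>f\<in>Hor C. hdom C f \<in> Ob C \<and> hcod C f \<in> Ob C) \<and>
     (\<forall>A\<in>Ob C. hid C A \<in> Hor C \<and> hdom C (hid C A) = A \<and> hcod C (hid C A) = A) \<and>
     (\<forall>f\<in>Hor C. \<forall>g\<in>Hor C. hcod C f = hdom C g \<longrightarrow>
        hcomp C g f \<in> Hor C \<and> hdom C (hcomp C g f) = hdom C f \<and> hcod C (hcomp C g f) = hcod C g) \<and>
     (\<forall>f\<in>Hor C. \<forall>g\<in>Hor C. \<forall>k\<in>Hor C. hcod C f = hdom C g \<longrightarrow> hcod C g = hdom C k \<longrightarrow>
        hcomp C k (hcomp C g f) = hcomp C (hcomp C k g) f) \<and>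
     (\<forall>f\<in>Hor C. hcomp C f (hid C (hdom C f)) = f \<and> hcomp C (hid C (hcod C f)) f = f)"

definition vcat :: "('o, 'h, 'v, 'z) dcat_scheme \<Rightarrow> bool" where
  "vcat C \<longleftrightarrow>
     (\<forall>f\<in>Ver C. vdom C f \<in> Ob C \<and> vcod C f \<in> Ob C) \<and>
     (\<forall>A\<in>Ob C. vid C A \<in> Ver C \<and> vdom C (vid C A) = A \<and> vcod C (vid C A) = A) \<and>
     (\<forall>f\<in>Ver C. \<forall>g\<in>Ver C. vcod C f = vdom C g \<longrightarrow>
        vcomp C g f \<in> Ver C \<and> vdom C (vcomp C g f) = vdom C f \<and> vcod C (vcomp C g f) = vcod C g) \<and>
     (\<forall>f\<in>Ver C. \<forall>g\<in>Ver C. \<forall>k\<in>Ver C. vcod C f = vdom C g \<longrightarrow> vcod C g = vdom C k \<longrightarrow>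
        vcomp C k (vcomp C g f) = vcomp C (vcomp C k g) f) \<and>
     (\<forall>f\<in>Ver C. vcomp C f (vid C (vdom C f)) = f \<and> vcomp C (vid C (vcod C f)) f = f)"

definition flat_dcat :: "('o, 'h, 'v, 'z) dcat_scheme \<Rightarrow> bool" where
  "flat_dcat C \<longleftrightarrow> hcat C \<and> vcat C \<and>
     (\<forall>t l r b. Sq C t l r b \<longrightarrow>
        t \<in> Hor C \<and> l \<in> Ver C \<and> r \<in> Ver C \<and> b \<in> Hor C \<and>
        hdom C t = vdom C l \<and> hcod C t = vdom C r \<and>
        hdom C b = vcod C l \<and> hcod C b = vcod C r) \<and>
     (\<forall>f\<in>Ver C. Sq C (hid C (vdom C f)) f f (hid C (vcod C f))) \<and>
     (\<forall>g\<in>Hor C. Sq C g (vid C (hdom C g)) (vid C (hcod C g)) g) \<and>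
     (\<forall>t l m b t' r b'. Sq C t l m b \<longrightarrow> Sq C t' m r b' \<longrightarrow>
        Sq C (hcomp C t' t) l r (hcomp C b' b)) \<and>
     (\<forall>t l r m l' r' b. Sq C t l r m \<longrightarrow> Sq C m l' r' b \<longrightarrow>
        Sq C t (vcomp C l' l) (vcomp C r' r) b)"

definition squares_cat :: "('o, 'h, 'v, 'z) dcat_scheme \<Rightarrow> 'o \<Rightarrow> bool" where
  "squares_cat C Z \<longleftrightarrow> flat_dcat C \<and> Z \<in> Ob C \<and>
     (\<forall>A\<in>Ob C. \<exists>!f. f \<in> Hor C \<and> hdom C f = Z \<and> hcod C f = A) \<and>
     (\<forall>A\<in>Ob C. \<exists>!f. f \<in> Ver C \<and> vdom C f = A \<and> vcod C f = Z)"

definition hinit :: "('o, 'h, 'v, 'z) dcat_scheme \<Rightarrow> 'o \<Rightarrow> 'o \<Rightarrow> 'h" where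
  "hinit C Z A = (THE f. f \<in> Hor C \<and> hdom C f = Z \<and> hcod C f = A)"

definition vterm :: "('o, 'h, 'v, 'z) dcat_scheme \<Rightarrow> 'o \<Rightarrow> 'o \<Rightarrow> 'v" where
  "vterm C Z A = (THE f. f \<in> Ver C \<and> vdom C f = A \<and> vcod C f = Z)"

definition vweq :: "('o, 'h, 'v, 'z) dcat_scheme \<Rightarrow> 'o \<Rightarrow> 'v \<Rightarrow> bool" where
  "vweq C Z f \<longleftrightarrow> f \<in> Ver C \<and>
     Sq C (hinit C Z (vdom C f)) (vid C Z) f (hinit C Z (vcod C f))"

definition hweq :: "('o, 'h, 'v, 'z) dcat_scheme \<Rightarrow> 'o \<Rightarrow> 'h \<Rightarrow> bool" where
  "hweq C Z g \<longleftrightarrow> g \<in> Hor C \<and>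
     Sq C g (vterm C Z (hdom C g)) (vterm C Z (hcod C g)) (hid C Z)"

definition vinverse :: "('o, 'h, 'v, 'z) dcat_scheme \<Rightarrow> 'v \<Rightarrow> 'v \<Rightarrow> bool" where
  "vinverse C g f \<longleftrightarrow> f \<in> Ver C \<and> g \<in> Ver C \<and> vdom C g = vcod C f \<and> vcod C g = vdom C f \<and>
     vcomp C g f = vid C (vdom C f) \<and> vcomp C f g = vid C (vcod C f)"

definition hinverse :: "('o, 'h, 'v, 'z) dcat_scheme \<Rightarrow> 'h \<Rightarrow> 'h \<Rightarrow> bool" where
  "hinverse C g f \<longleftrightarrow> f \<in> Hor C \<and> g \<in> Hor C \<and> hdom C g = hcod C f \<and> hcod C g = hdom C f \<and>
     hcomp C g f = hid C (hdom C f) \<and> hcomp C f g = hid C (hcod C f)"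

definition viso :: "('o, 'h, 'v, 'z) dcat_scheme \<Rightarrow> 'v \<Rightarrow> bool" where
  "viso C f \<longleftrightarrow> (\<exists>g. vinverse C g f)"

definition hiso :: "('o, 'h, 'v, 'z) dcat_scheme \<Rightarrow> 'h \<Rightarrow> bool" where
  "hiso C f \<longleftrightarrow> (\<exists>g. hinverse C g f)"

text \<open>A double functor boxdot -> C is determined by the image (t, l, r, b) of the
generating square (top a>->b, left a->>c, right b->>d, bottom c>->d), which must
be a square.  A double functor span -> C is a pair (t, l) (a>->b, a->>c); a double
functor cospan -> C is a pair (r, b) (b->>d, c>->d).  Vertical natural
transformations are tuples of vertical components, at (a,b,c,d), (a,b,c), (b,c,d).\<close>

fun sqF :: "('o, 'h, 'v, 'z) dcat_scheme \<Rightarrow> 'h \<times> 'v \<times> 'v \<times> 'h \<Rightarrow> bool" where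
  "sqF C (t, l, r, b) = Sq C t l r b"

fun spanF :: "('o, 'h, 'v, 'z) dcat_scheme \<Rightarrow> 'h \<times> 'v \<Rightarrow> bool" where
  "spanF C (t, l) \<longleftrightarrow> t \<in> Hor C \<and> l \<in> Ver C \<and> hdom C t = vdom C l"

fun cospanF :: "('o, 'h, 'v, 'z) dcat_scheme \<Rightarrow> 'v \<times> 'h \<Rightarrow> bool" where
  "cospanF C (r, b) \<longleftrightarrow> r \<in> Ver C \<and> b \<in> Hor C \<and> vcod C r = hcod C b"

definition vmor :: "('o, 'h, 'v, 'z) dcat_scheme \<Rightarrow> 'v \<Rightarrow> 'o \<Rightarrow> 'o \<Rightarrow> bool" where
  "vmor C f A B \<longleftrightarrow> f \<in> Ver C \<and> vdom C f = A \<and> vcod C f = B"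

fun sqNT :: "('o, 'h, 'v, 'z) dcat_scheme \<Rightarrow> 'h \<times> 'v \<times> 'v \<times> 'h \<Rightarrow> 'h \<times> 'v \<times> 'v \<times> 'h
     \<Rightarrow> 'v \<times> 'v \<times> 'v \<times> 'v \<Rightarrow> bool" where
  "sqNT C (t, l, r, b) (t', l', r', b') (xa, xb, xc, xd) \<longleftrightarrow>
     sqF C (t, l, r, b) \<and> sqF C (t', l', r', b') \<and>
     vmor C xa (hdom C t) (hdom C t') \<and> vmor C xb (hcod C t) (hcod C t') \<and>
     vmor C xc (hdom C b) (hdom C b') \<and> vmor C xd (hcod C b) (hcod C b') \<and>
     Sq C t xa xb t' \<and> Sq C b xc xd b' \<and>
     vcomp C l' xa = vcomp C xc l \<and> vcomp C r' xb = vcomp C xd r"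

fun spanNT :: "('o, 'h, 'v, 'z) dcat_scheme \<Rightarrow> 'h \<times> 'v \<Rightarrow> 'h \<times> 'v \<Rightarrow> 'v \<times> 'v \<times> 'v \<Rightarrow> bool" where
  "spanNT C (t, l) (t', l') (xa, xb, xc) \<longleftrightarrow>
     spanF C (t, l) \<and> spanF C (t', l') \<and>
     vmor C xa (hdom C t) (hdom C t') \<and> vmor C xb (hcod C t) (hcod C t') \<and>
     vmor C xc (vcod C l) (vcod C l') \<and>
     Sq C t xa xb t' \<and> vcomp C l' xa = vcomp C xc l"

fun cospanNT :: "('o, 'h, 'v, 'z) dcat_scheme \<Rightarrow> 'v \<times> 'h \<Rightarrow> 'v \<times> 'h \<Rightarrow> 'v \<times> 'v \<times> 'v \<Rightarrow> bool" where
  "cospanNT C (r, b) (r', b') (xb, xc, xd) \<longleftrightarrow>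
     cospanF C (r, b) \<and> cospanF C (r', b') \<and>
     vmor C xb (vdom C r) (vdom C r') \<and> vmor C xc (hdom C b) (hdom C b') \<and>
     vmor C xd (hcod C b) (hcod C b') \<and>
     Sq C b xc xd b' \<and> vcomp C r' xb = vcomp C xd r"

fun sqId :: "('o, 'h, 'v, 'z) dcat_scheme \<Rightarrow> 'h \<times> 'v \<times> 'v \<times> 'h \<Rightarrow> 'v \<times> 'v \<times> 'v \<times> 'v" where
  "sqId C (t, l, r, b) = (vid C (hdom C t), vid C (hcod C t), vid C (hdom C b), vid C (hcod C b))"

fun spanId :: "('o, 'h, 'v, 'z) dcat_scheme \<Rightarrow> 'h \<times> 'v \<Rightarrow> 'v \<times> 'v \<times> 'v" where
  "spanId C (t, l) = (vid C (hdom C t), vid C (hcod C t), vid C (vcod C l))"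

fun cospanId :: "('o, 'h, 'v, 'z) dcat_scheme \<Rightarrow> 'v \<times> 'h \<Rightarrow> 'v \<times> 'v \<times> 'v" where
  "cospanId C (r, b) = (vid C (vdom C r), vid C (hdom C b), vid C (hcod C b))"

fun sqComp :: "('o, 'h, 'v, 'z) dcat_scheme \<Rightarrow> 'v \<times> 'v \<times> 'v \<times> 'v \<Rightarrow> 'v \<times> 'v \<times> 'v \<times> 'v
     \<Rightarrow> 'v \<times> 'v \<times> 'v \<times> 'v" where
  "sqComp C (ya, yb, yc, yd) (xa, xb, xc, xd) =
     (vcomp C ya xa, vcomp C yb xb, vcomp C yc xc, vcomp C yd xd)"

fun triComp :: "('o, 'h, 'v, 'z) dcat_scheme \<Rightarrow> 'v \<times> 'v \<times> 'v \<Rightarrow> 'v \<times> 'v \<times> 'v \<Rightarrow> 'v \<times> 'v \<times> 'v" where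
  "triComp C (y1, y2, y3) (x1, x2, x3) = (vcomp C y1 x1, vcomp C y2 x2, vcomp C y3 x3)"

text \<open>The restriction functors i^* and j^*, on objects and on morphisms.\<close>

fun iObj :: "'h \<times> 'v \<times> 'v \<times> 'h \<Rightarrow> 'h \<times> 'v" where
  "iObj (t, l, r, b) = (t, l)"

fun iMor :: "'v \<times> 'v \<times> 'v \<times> 'v \<Rightarrow> 'v \<times> 'v \<times> 'v" where
  "iMor (xa, xb, xc, xd) = (xa, xb, xc)"

fun jObj :: "'h \<times> 'v \<times> 'v \<times> 'h \<Rightarrow> 'v \<times> 'h" where
  "jObj (t, l, r, b) = (r, b)"

fun jMor :: "'v \<times> 'v \<times> 'v \<times> 'v \<Rightarrow> 'v \<times> 'v \<times> 'v" where
  "jMor (xa, xb, xc, xd) = (xb, xc, xd)"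

text \<open>s (object part so, morphism part sm X Y x) is a functor
Fun^v(span,C) -> Fun^v(boxdot,C) which is a section of i^*.\<close>

definition span_section :: "('o, 'h, 'v, 'z) dcat_scheme \<Rightarrow> ('h \<times> 'v \<Rightarrow> 'h \<times> 'v \<times> 'v \<times> 'h)
    \<Rightarrow> ('h \<times> 'v \<Rightarrow> 'h \<times> 'v \<Rightarrow> 'v \<times> 'v \<times> 'v \<Rightarrow> 'v \<times> 'v \<times> 'v \<times> 'v) \<Rightarrow> bool" where
  "span_section C so sm \<longleftrightarrow>
     (\<forall>X. spanF C X \<longrightarrow> sqF C (so X)) \<and>
     (\<forall>X Y x. spanNT C X Y x \<longrightarrow> sqNT C (so X) (so Y) (sm X Y x)) \<and>
     (\<forall>X. spanF C X \<longrightarrow> sm X X (spanId C X) = sqId C (so X)) \<and>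
     (\<forall>X Y Z x y. spanNT C X Y x \<longrightarrow> spanNT C Y Z y \<longrightarrow>
        sm X Z (triComp C y x) = sqComp C (sm Y Z y) (sm X Y x)) \<and>
     (\<forall>X. spanF C X \<longrightarrow> iObj (so X) = X) \<and>
     (\<forall>X Y x. spanNT C X Y x \<longrightarrow> iMor (sm X Y x) = x)"

definition cospan_section :: "('o, 'h, 'v, 'z) dcat_scheme \<Rightarrow> ('v \<times> 'h \<Rightarrow> 'h \<times> 'v \<times> 'v \<times> 'h)
    \<Rightarrow> ('v \<times> 'h \<Rightarrow> 'v \<times> 'h \<Rightarrow> 'v \<times> 'v \<times> 'v \<Rightarrow> 'v \<times> 'v \<times> 'v \<times> 'v) \<Rightarrow> bool" where
  "cospan_section C to tm \<longleftrightarrow>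
     (\<forall>X. cospanF C X \<longrightarrow> sqF C (to X)) \<and>
     (\<forall>X Y x. cospanNT C X Y x \<longrightarrow> sqNT C (to X) (to Y) (tm X Y x)) \<and>
     (\<forall>X. cospanF C X \<longrightarrow> tm X X (cospanId C X) = sqId C (to X)) \<and>
     (\<forall>X Y Z x y. cospanNT C X Y x \<longrightarrow> cospanNT C Y Z y \<longrightarrow>
        tm X Z (triComp C y x) = sqComp C (tm Y Z y) (tm X Y x)) \<and>
     (\<forall>X. cospanF C X \<longrightarrow> jObj (to X) = X) \<and>
     (\<forall>X Y x. cospanNT C X Y x \<longrightarrow> jMor (tm X Y x) = x)"

text \<open>Stability: (i)-(iv).  w X is the component at X of w : s i^* => id, and
u X the component at X of u : t j^* => id.\<close>

definition stable :: "('o, 'h, 'v, 'z) dcat_scheme \<Rightarrow> 'o \<Rightarrow> bool" where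
  "stable C Z \<longleftrightarrow>
    (\<exists>so sm w. span_section C so sm \<and>
       (\<forall>X. sqF C X \<longrightarrow> sqNT C (so (iObj X)) X (w X) \<and>
          (case (X, w X) of ((t, l, r, b), (wa, wb, wc, wd)) \<Rightarrow>
             wa = vid C (hdom C t) \<and> wb = vid C (hcod C t) \<and> wc = vid C (hdom C b))) \<and>
       (\<forall>X Y x. sqNT C X Y x \<longrightarrow>
          sqComp C x (w X) = sqComp C (w Y) (sm (iObj X) (iObj Y) (iMor x)))) \<and>
    (\<exists>to tm u. cospan_section C to tm \<and>
       (\<forall>X. sqF C X \<longrightarrow> sqNT C (to (jObj X)) X (u X) \<and>
          (case (X, u X) of ((t, l, r, b), (ua, ub, uc, ud)) \<Rightarrow>
             vweq C Z ua \<and> ub = vid C (hcod C t) \<and> uc = vid C (hdom C b) \<and> ud = vid C (hcod C b))) \<and>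
       (\<forall>X Y x. sqNT C X Y x \<longrightarrow>
          sqComp C x (u X) = sqComp C (u Y) (tm (jObj X) (jObj Y) (jMor x))))"

definition isostable :: "('o, 'h, 'v, 'z) dcat_scheme \<Rightarrow> 'o \<Rightarrow> bool" where
  "isostable C Z \<longleftrightarrow> squares_cat C Z \<and> stable C Z \<and>
     (\<forall>f. vweq C Z f \<longrightarrow> viso C f) \<and>
     (\<forall>g. hweq C Z g \<longrightarrow> hiso C g) \<and>
     (\<forall>f k g h g' h'. f \<in> Hor C \<longrightarrow> k \<in> Hor C \<longrightarrow>
        vmor C g (hdom C f) (hdom C k) \<longrightarrow> vmor C h (hcod C f) (hcod C k) \<longrightarrow>
        vinverse C g' g \<longrightarrow> vinverse C h' h \<longrightarrow>
        (Sq C f g h k \<longleftrightarrow> Sq C k g' h' f))"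

text \<open>An object of S_n is a triple (A, hh, vv): objects A j k (0 <= j <= k <= n),
horizontal generators hh j k : A j k >-> A j (k+1) (j <= k < n), vertical generators
vv j k : A j k ->> A (j+1) k (j < k <= n).  Values outside these ranges are irrelevant.\<close>

fun Sn_obj :: "('o, 'h, 'v, 'z) dcat_scheme \<Rightarrow> 'o \<Rightarrow> nat
    \<Rightarrow> (nat \<Rightarrow> nat \<Rightarrow> 'o) \<times> (nat \<Rightarrow> nat \<Rightarrow> 'h) \<times> (nat \<Rightarrow> nat \<Rightarrow> 'v) \<Rightarrow> bool" where
  "Sn_obj C Z n (A, hh, vv) \<longleftrightarrow>
     (\<forall>j k. j \<le> k \<and> k \<le> n \<longrightarrow> A j k \<in> Ob C) \<and>
     (\<forall>j. j \<le> n \<longrightarrow> A j j = Z) \<and>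
     (\<forall>j k. j \<le> k \<and> k < n \<longrightarrow>
        hh j k \<in> Hor C \<and> hdom C (hh j k) = A j k \<and> hcod C (hh j k) = A j (Suc k)) \<and>
     (\<forall>j k. j < k \<and> k \<le> n \<longrightarrow>
        vv j k \<in> Ver C \<and> vdom C (vv j k) = A j k \<and> vcod C (vv j k) = A (Suc j) k) \<and>
     (\<forall>j k. j < k \<and> k < n \<longrightarrow> Sq C (hh j k) (vv j k) (vv j (Suc k)) (hh (Suc j) k))"

fun Sn_mor :: "('o, 'h, 'v, 'z) dcat_scheme \<Rightarrow> nat
    \<Rightarrow> (nat \<Rightarrow> nat \<Rightarrow> 'o) \<times> (nat \<Rightarrow> nat \<Rightarrow> 'h) \<times> (nat \<Rightarrow> nat \<Rightarrow> 'v)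
    \<Rightarrow> (nat \<Rightarrow> nat \<Rightarrow> 'o) \<times> (nat \<Rightarrow> nat \<Rightarrow> 'h) \<times> (nat \<Rightarrow> nat \<Rightarrow> 'v)
    \<Rightarrow> (nat \<Rightarrow> nat \<Rightarrow> 'v) \<Rightarrow> bool" where
  "Sn_mor C n (A, hh, vv) (A', hh', vv') phi \<longleftrightarrow>
     (\<forall>j k. j \<le> k \<and> k \<le> n \<longrightarrow> vmor C (phi j k) (A j k) (A' j k)) \<and>
     (\<forall>j k. j \<le> k \<and> k < n \<longrightarrow> Sq C (hh j k) (phi j k) (phi j (Suc k)) (hh' j k)) \<and>
     (\<forall>j k. j < k \<and> k \<le> n \<longrightarrow> vcomp C (vv' j k) (phi j k) = vcomp C (phi (Suc j) k) (vv j k))"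

text \<open>S_n C is a groupoid: every morphism has a two-sided inverse (composition and
identities are componentwise in the vertical category; morphisms are compared on
the index range 0 <= j <= k <= n).\<close>

definition Sn_groupoid :: "('o, 'h, 'v, 'z) dcat_scheme \<Rightarrow> 'o \<Rightarrow> nat \<Rightarrow> bool" where
  "Sn_groupoid C Z n \<longleftrightarrow>
     (\<forall>X Y phi. Sn_obj C Z n X \<longrightarrow> Sn_obj C Z n Y \<longrightarrow> Sn_mor C n X Y phi \<longrightarrow>
        (\<exists>psi. Sn_mor C n Y X psi \<and>
           (\<forall>j k. j \<le> k \<and> k \<le> n \<longrightarrow>
              vcomp C (psi j k) (phi j k) = vid C (fst X j k) \<and>
              vcomp C (phi j k) (psi j k) = vid C (fst Y j k))))"

end

theory Submission
  imports Defs
begin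

text \<open>The diagonal components of a morphism phi of S_n are endomorphisms of O, hence
identities, hence vertical weak equivalences.  Pasting the weak-equivalence square of
phi(j,k) with the square of phi along a horizontal generator shows that phi(j,k+1) is one
too, because O is initial in the horizontal category.  So every component is a weak
equivalence and isostability inverts it.  The inverses form a morphism of S_n: the squares
along horizontal generators are inverted by the square-inversion axiom, and the commuting
squares along vertical generators are inverted in the vertical category.\<close>

context
  fixes C :: "('o, 'h, 'v, 'z) dcat_scheme"
  assumes vc: "vcat C"
begin

lemma vcomp_closed:
  "f \<in> Ver C \<Longrightarrow> g \<in> Ver C \<Longrightarrow> vcod C f = vdom C g \<Longrightarrow>
    vcomp C g f \<in> Ver C \<and> vdom C (vcomp C g f) = vdom C f \<and> vcod C (vcomp C g f) = vcod C g"
  using vc unfolding vcat_def by blast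

lemma vcomp_assoc:
  "f \<in> Ver C \<Longrightarrow> g \<in> Ver C \<Longrightarrow> k \<in> Ver C \<Longrightarrow> vcod C f = vdom C g \<Longrightarrow> vcod C g = vdom C k \<Longrightarrow>
    vcomp C k (vcomp C g f) = vcomp C (vcomp C k g) f"
  using vc unfolding vcat_def by blast

lemma vcomp_vid_right: "f \<in> Ver C \<Longrightarrow> vcomp C f (vid C (vdom C f)) = f"
  using vc unfolding vcat_def by blast

lemma vcomp_vid_left: "f \<in> Ver C \<Longrightarrow> vcomp C (vid C (vcod C f)) f = f"
  using vc unfolding vcat_def by blast

lemma vinverse_commute:
  assumes phi: "vinverse C psi phi" and phi': "vinverse C psi' phi'"
    and a: "vmor C a (vdom C phi) (vdom C phi')" and a': "vmor C a' (vcod C phi) (vcod C phi')"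
    and comm: "vcomp C a' phi = vcomp C phi' a"
  shows "vcomp C a psi = vcomp C psi' a'"
proof -
  have p: "phi \<in> Ver C" "psi \<in> Ver C" "vdom C psi = vcod C phi" "vcod C psi = vdom C phi"
    "vcomp C phi psi = vid C (vcod C phi)"
    using phi unfolding vinverse_def by auto
  have q: "phi' \<in> Ver C" "psi' \<in> Ver C" "vdom C psi' = vcod C phi'" "vcod C psi' = vdom C phi'"
    "vcomp C psi' phi' = vid C (vdom C phi')"
    using phi' unfolding vinverse_def by auto
  have a_Ver: "a \<in> Ver C" "vdom C a = vdom C phi" "vcod C a = vdom C phi'"
    and a'_Ver: "a' \<in> Ver C" "vdom C a' = vcod C phi" "vcod C a' = vcod C phi'"
    using a a' unfolding vmor_def by auto
  have a_psi: "vcomp C a psi \<in> Ver C" "vcod C (vcomp C a psi) = vdom C phi'"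
    using vcomp_closed[of psi a] p a_Ver by auto
  have "vcomp C a psi = vcomp C (vcomp C psi' phi') (vcomp C a psi)"
    using vcomp_vid_left[OF a_psi(1)] a_psi(2) q(5) by simp
  also have "\<dots> = vcomp C psi' (vcomp C (vcomp C phi' a) psi)"
    using vcomp_assoc[of "vcomp C a psi" phi' psi'] vcomp_assoc[of psi a phi'] a_psi p q a_Ver
    by simp
  also have "\<dots> = vcomp C psi' (vcomp C a' (vcomp C phi psi))"
    using comm vcomp_assoc[of psi phi a'] p a'_Ver by simp
  also have "\<dots> = vcomp C psi' a'"
    using vcomp_vid_right[OF a'_Ver(1)] a'_Ver(2) p(5) by simp
  finally show ?thesis .
qed

end

lemma hcomp_closed:
  "hcat C \<Longrightarrow> f \<in> Hor C \<Longrightarrow> g \<in> Hor C \<Longrightarrow> hcod C f = hdom C g \<Longrightarrow>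
    hcomp C g f \<in> Hor C \<and> hdom C (hcomp C g f) = hdom C f \<and> hcod C (hcomp C g f) = hcod C g"
  unfolding hcat_def by blast

lemma Sq_boundary:
  "flat_dcat C \<Longrightarrow> Sq C t l r b \<Longrightarrow>
    t \<in> Hor C \<and> l \<in> Ver C \<and> r \<in> Ver C \<and> b \<in> Hor C \<and>
    hdom C t = vdom C l \<and> hcod C t = vdom C r \<and> hdom C b = vcod C l \<and> hcod C b = vcod C r"
  unfolding flat_dcat_def by blast

lemma Sq_hcomp:
  "flat_dcat C \<Longrightarrow> Sq C t l m b \<Longrightarrow> Sq C t' m r b' \<Longrightarrow> Sq C (hcomp C t' t) l r (hcomp C b' b)"
  unfolding flat_dcat_def by blast

context
  fixes C :: "('o, 'h, 'v, 'z) dcat_scheme" and Z :: 'o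
  assumes sc: "squares_cat C Z"
begin

lemma hinit_Hor:
  assumes "A \<in> Ob C"
  shows "hinit C Z A \<in> Hor C \<and> hdom C (hinit C Z A) = Z \<and> hcod C (hinit C Z A) = A"
  using theI'[of "\<lambda>f. f \<in> Hor C \<and> hdom C f = Z \<and> hcod C f = A"] sc assms
  unfolding squares_cat_def hinit_def by blast

lemma hinit_unique:
  assumes "A \<in> Ob C" "f \<in> Hor C" "hdom C f = Z" "hcod C f = A"
  shows "f = hinit C Z A"
  using the1_equality[of "\<lambda>f. f \<in> Hor C \<and> hdom C f = Z \<and> hcod C f = A"] sc assms
  unfolding squares_cat_def hinit_def by (metis (no_types, lifting))

lemma vweq_endo:
  assumes p: "vmor C p Z Z"
  shows "vweq C Z p"
proof -
  have fl: "flat_dcat C" and Z: "Z \<in> Ob C" using sc unfolding squares_cat_def by auto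
  have hc: "hcat C" and vc: "vcat C" using fl unfolding flat_dcat_def by auto
  have hid_Z: "hid C Z \<in> Hor C" "hdom C (hid C Z) = Z" "hcod C (hid C Z) = Z"
    and vid_Z: "vmor C (vid C Z) Z Z"
    using hc vc Z unfolding hcat_def vcat_def vmor_def by auto
  have "p = vid C Z"
    using sc Z p vid_Z unfolding squares_cat_def vmor_def by blast
  moreover have "hinit C Z Z = hid C Z"
    using hinit_unique[OF Z hid_Z] by simp
  moreover have "Sq C (hid C Z) (vid C Z) (vid C Z) (hid C Z)"
    using fl hid_Z unfolding flat_dcat_def by metis
  ultimately show ?thesis using p unfolding vweq_def vmor_def by auto
qed

lemma vweq_Sq_right:
  assumes p: "vweq C Z p" and s: "Sq C t p q b"
  shows "vweq C Z q"
proof -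
  have fl: "flat_dcat C" using sc unfolding squares_cat_def by auto
  have hc: "hcat C" and vc: "vcat C" using fl unfolding flat_dcat_def by auto
  note bd = Sq_boundary[OF fl s]
  have obs: "vdom C p \<in> Ob C" "vcod C p \<in> Ob C" "vdom C q \<in> Ob C" "vcod C q \<in> Ob C"
    using vc bd unfolding vcat_def by auto
  have pasted: "Sq C (hcomp C t (hinit C Z (vdom C p))) (vid C Z) q (hcomp C b (hinit C Z (vcod C p)))"
    using Sq_hcomp[OF fl _ s] p unfolding vweq_def by blast
  have "hcomp C t (hinit C Z (vdom C p)) = hinit C Z (vdom C q)"
    using hinit_unique[OF obs(3)] hinit_Hor[OF obs(1)] hcomp_closed[OF hc, of "hinit C Z (vdom C p)" t] bd
    by auto
  moreover have "hcomp C b (hinit C Z (vcod C p)) = hinit C Z (vcod C q)"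
    using hinit_unique[OF obs(4)] hinit_Hor[OF obs(2)] hcomp_closed[OF hc, of "hinit C Z (vcod C p)" b] bd
    by auto
  ultimately show ?thesis using pasted bd unfolding vweq_def by auto
qed

lemma Sn_mor_vweq:
  assumes X: "Sn_obj C Z n (A, hh, vv)" and Y: "Sn_obj C Z n (A', hh', vv')"
    and phi: "Sn_mor C n (A, hh, vv) (A', hh', vv') phi"
    and jk: "j \<le> k" "k \<le> n"
  shows "vweq C Z (phi j k)"
  using jk
proof (induction k rule: dec_induct)
  case base
  have "vmor C (phi j j) (A j j) (A' j j)" using phi jk by simp
  moreover have "A j j = Z" "A' j j = Z" using X Y jk by simp_all
  ultimately show ?case using vweq_endo by simp
next
  case (step k)
  then have "Sq C (hh j k) (phi j k) (phi j (Suc k)) (hh' j k)" using phi by simp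
  with step show ?case using vweq_Sq_right by simp
qed

end

lemma isostable_Sq_inverse:
  assumes "isostable C Z" "Sq C f g h k"
    and "f \<in> Hor C" "k \<in> Hor C"
    and "vmor C g (hdom C f) (hdom C k)" "vmor C h (hcod C f) (hcod C k)"
    and "vinverse C g' g" "vinverse C h' h"
  shows "Sq C k g' h' f"
  using assms unfolding isostable_def by blast

lemma Sn_mor_inverse:
  assumes iso: "isostable C Z"
    and X: "Sn_obj C Z n (A, hh, vv)" and Y: "Sn_obj C Z n (A', hh', vv')"
    and phi: "Sn_mor C n (A, hh, vv) (A', hh', vv') phi"
    and psi: "\<And>j k. j \<le> k \<Longrightarrow> k \<le> n \<Longrightarrow> vinverse C (psi j k) (phi j k)"
  shows "Sn_mor C n (A', hh', vv') (A, hh, vv) psi"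
  unfolding Sn_mor.simps
proof (intro conjI allI impI)
  have vc: "vcat C" using iso unfolding isostable_def squares_cat_def flat_dcat_def by blast
  have phi_vmor: "vmor C (phi j k) (A j k) (A' j k)" if "j \<le> k" "k \<le> n" for j k
    using phi that by simp
  fix j k
  show "vmor C (psi j k) (A' j k) (A j k)" if "j \<le> k \<and> k \<le> n"
    using phi_vmor[of j k] psi[of j k] that unfolding vinverse_def vmor_def by auto
  show "Sq C (hh' j k) (psi j k) (psi j (Suc k)) (hh j k)" if "j \<le> k \<and> k < n"
    using isostable_Sq_inverse[OF iso, of "hh j k" "phi j k" "phi j (Suc k)" "hh' j k"]
      X Y phi psi that by auto
  show "vcomp C (vv j k) (psi j k) = vcomp C (psi (Suc j) k) (vv' j k)" if "j < k \<and> k \<le> n"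
    using vinverse_commute[OF vc psi[of j k] psi[of "Suc j" k], of "vv j k" "vv' j k"]
      phi_vmor[of j k] phi_vmor[of "Suc j" k] X Y phi that unfolding vmor_def by auto
qed

theorem lemma3p21:
  fixes C :: "('o, 'h, 'v) dcat" and Z :: 'o
  assumes "isostable C Z"
  shows "\<forall>n. Sn_groupoid C Z n"
  unfolding Sn_groupoid_def
proof (intro allI impI)
  fix n X Y phi
  assume "Sn_obj C Z n X" "Sn_obj C Z n Y" and phi: "Sn_mor C n X Y phi"
  moreover obtain A hh vv A' hh' vv' where XY: "X = (A, hh, vv)" "Y = (A', hh', vv')"
    by (cases X, cases Y) auto
  ultimately have X: "Sn_obj C Z n (A, hh, vv)" and Y: "Sn_obj C Z n (A', hh', vv')"
    and phi: "Sn_mor C n (A, hh, vv) (A', hh', vv') phi" by simp_all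
  have "\<exists>psi. vinverse C psi (phi j k)" if "j \<le> k" "k \<le> n" for j k
    using Sn_mor_vweq[OF _ X Y phi that] assms unfolding isostable_def viso_def by blast
  then obtain psi where psi: "\<And>j k. j \<le> k \<Longrightarrow> k \<le> n \<Longrightarrow> vinverse C (psi j k) (phi j k)"
    by metis
  have "Sn_mor C n Y X psi"
    using Sn_mor_inverse[OF assms X Y phi psi] XY by simp
  moreover have "vcomp C (psi j k) (phi j k) = vid C (fst X j k) \<and>
      vcomp C (phi j k) (psi j k) = vid C (fst Y j k)" if "j \<le> k \<and> k \<le> n" for j k
  proof -
    have "vmor C (phi j k) (A j k) (A' j k)" using phi that by simp
    then show ?thesis using psi[of j k] that XY unfolding vinverse_def vmor_def by auto
  qed
  ultimately show "\<exists>psi. Sn_mor C n Y X psi \<and> (\<forall>j k. j \<le> k \<and> k \<le> n \<longrightarrow>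
      vcomp C (psi j k) (phi j k) = vid C (fst X j k) \<and> vcomp C (phi j k) (psi j k) = vid C (fst Y j k))"
    by blast
qed

end
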